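(* Let $\tau$ be a $T_1$-topology on the bicyclic monoid $\mathcal{C}(p,q)$ such that $(\mathcal{C}(p,q),\tau)$ is a semitopological semigroup (i.e. the semigroup operation is separately continuous) and the topological space $(\mathcal{C}(p,q),\tau)$ is a Baire space. Then $\tau$ is the discrete topology.
   Context: The bicyclic monoid $\mathcal{C}(p,q)$ is the monoid with identity $1$ generated by two elements $p,q$ subject only to $pq=1$. Every element has a unique form $q^ip^j$ with $i,j\in\omega=\{0,1,2,\dots\}$, and multiplication is $q^kp^l\cdot q^mp^n = q^{k-l+m}p^n$ if $l<m$, $=q^kp^n$ if $l=m$, $=q^kp^{l-m+n}$ if $l>m$. A topological space $X$ is Baire if for every sequence $A_1,A_2,\dots$ of dense open subsets of $X$ the intersection $\bigcap_{i=1}^\infty A_i$ is dense in $X$. *)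

theory Defs
  imports "HOL-Analysis.Analysis"
begin

text \<open>The bicyclic monoid C(p,q): the pair (i,j) represents the element q^i p^j.\<close>
type_synonym bicyclic = "nat \<times> nat"

definition bicyclic_mult :: "bicyclic \<Rightarrow> bicyclic \<Rightarrow> bicyclic" where
  "bicyclic_mult x y = (case x of (k, l) \<Rightarrow> case y of (m, n) \<Rightarrow>
     if l < m then (k + m - l, n)
     else if l = m then (k, n)
     else (k, l + n - m))"

definition baire_space :: "'a topology \<Rightarrow> bool" where
  "baire_space X \<longleftrightarrow>
     (\<forall>A :: nat \<Rightarrow> 'a set.
        (\<forall>i. openin X (A i) \<and> X closure_of (A i) = topspace X)
        \<longrightarrow> X closure_of (topspace X \<inter> (\<Inter>i. A i)) = topspace X)"

definition semitopological :: "'a topology \<Rightarrow> ('a \<Rightarrow> 'a \<Rightarrow> 'a) \<Rightarrow> bool" where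
  "semitopological X f \<longleftrightarrow>
     (\<forall>a \<in> topspace X. continuous_map X X (\<lambda>x. f a x) \<and> continuous_map X X (\<lambda>x. f x a))"

end

theory Submission
  imports Defs
begin

text \<open>A countable Baire \<open>T\<^sub>1\<close> space has an isolated point: otherwise the complements of
  its points would be countably many dense open sets with empty intersection. Translations of
  the bicyclic monoid have finite fibres, and in a \<open>T\<^sub>1\<close> space every point of a finite open set
  is isolated, so separate continuity pulls isolated points back along translations. Since
  \<open>(i,j) = (i,n) (n,j)\<close> and \<open>(i,n) = (i,m) (m,n)\<close>, one isolated point \<open>(i,j)\<close> makes every
  point \<open>(m,n)\<close> isolated.\<close>

lemma interior_of_singleton_not_open:
  assumes "\<not> openin X {z}"
  shows "X interior_of {z} = {}"
  using assms interior_of_subset[of X "{z}"] openin_interior_of[of X "{z}"]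
  by (metis subset_singletonD)

lemma baire_countable_t1_isolated_point:
  assumes baire: "baire_space X" and T1: "t1_space X"
    and countable: "countable (topspace X)" and nonempty: "topspace X \<noteq> {}"
  shows "\<exists>z. openin X {z}"
proof (rule ccontr)
  assume no_isolated: "\<nexists>z. openin X {z}"
  define A where "A n = topspace X - {from_nat_into (topspace X) n}" for n
  have "\<forall>n. openin X (A n) \<and> X closure_of (A n) = topspace X"
  proof
    fix n
    show "openin X (A n) \<and> X closure_of (A n) = topspace X"
    proof
      show "openin X (A n)"
        unfolding A_def by (meson T1 openin_topspace t1_space_openin_delete_alt)
      show "X closure_of (A n) = topspace X"
        unfolding A_def closure_of_complement
        using no_isolated by (simp add: interior_of_singleton_not_open)
    qed
  qed
  then have "X closure_of (topspace X \<inter> (\<Inter>n. A n)) = topspace X"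
    by (rule baire[unfolded baire_space_def, THEN spec, THEN mp])
  moreover have "topspace X \<inter> (\<Inter>n. A n) = {}"
  proof -
    have "x \<notin> (\<Inter>n. A n)" if x: "x \<in> topspace X" for x
    proof -
      obtain n where "from_nat_into (topspace X) n = x"
        using from_nat_into_surj[OF countable x] by blast
      then show ?thesis
        unfolding A_def by blast
    qed
    then show ?thesis
      by blast
  qed
  ultimately show False
    using nonempty by simp
qed

lemma t1_openin_singleton_of_finite_open:
  assumes T1: "t1_space X" and "openin X S" "finite S" "w \<in> S"
  shows "openin X {w}"
proof -
  have "closedin X (S - {w})"
    using assms openin_subset by (metis Diff_subset finite_subset subset_trans t1_space_closedin_finite)
  then have "openin X (S - (S - {w}))"
    using \<open>openin X S\<close> openin_diff by blast
  moreover have "S - (S - {w}) = {w}"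
    using \<open>w \<in> S\<close> by blast
  ultimately show ?thesis
    by simp
qed

lemma openin_singleton_of_finite_fibre:
  assumes T1: "t1_space X" and g: "continuous_map X Y g" and z: "openin Y {z}"
    and fibre: "finite {x \<in> topspace X. g x = z}"
    and "w \<in> topspace X" "g w = z"
  shows "openin X {w}"
proof -
  have "openin X {x \<in> topspace X. g x \<in> {z}}"
    using g z openin_continuous_map_preimage by blast
  then show ?thesis
    using t1_openin_singleton_of_finite_open[OF T1 _ fibre] assms(5,6) by auto
qed

lemma bicyclic_mult_cancel: "bicyclic_mult (i, n) (n, j) = (i, j)"
  by (simp add: bicyclic_mult_def)

lemma finite_bicyclic_mult_left_fibre: "finite {y. bicyclic_mult (a, b) y = (c, d)}"
proof -
  have "{y. bicyclic_mult (a, b) y = (c, d)} \<subseteq> {..c + a + b} \<times> {..d + a + b}"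
    by (auto simp: bicyclic_mult_def split: if_splits)
  then show ?thesis
    using finite_subset by blast
qed

lemma finite_bicyclic_mult_right_fibre: "finite {y. bicyclic_mult y (a, b) = (c, d)}"
proof -
  have "{y. bicyclic_mult y (a, b) = (c, d)} \<subseteq> {..c + a + b} \<times> {..d + a + b}"
    by (auto simp: bicyclic_mult_def split: if_splits)
  then show ?thesis
    using finite_subset by blast
qed

theorem theorem1:
  fixes \<tau> :: "bicyclic topology"
  assumes "topspace \<tau> = UNIV"
    and "t1_space \<tau>"
    and "semitopological \<tau> bicyclic_mult"
    and "baire_space \<tau>"
  shows "\<tau> = discrete_topology UNIV"
proof -
  note top = assms(1) and T1 = assms(2)
  have left: "continuous_map \<tau> \<tau> (bicyclic_mult a)"
    and right: "continuous_map \<tau> \<tau> (\<lambda>x. bicyclic_mult x a)" for a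
    using assms(3) unfolding semitopological_def top by (simp_all del: split_paired_All)
  obtain i j where ij: "openin \<tau> {(i, j)}"
    using baire_countable_t1_isolated_point[OF assms(4) T1] top by auto
  have "openin \<tau> {(m, n)}" for m n
  proof -
    have "openin \<tau> {(i, n)}"
      using openin_singleton_of_finite_fibre[OF T1 right[of "(n, j)"] ij]
      by (simp add: top finite_bicyclic_mult_right_fibre bicyclic_mult_cancel)
    then show ?thesis
      using openin_singleton_of_finite_fibre[OF T1 left[of "(i, m)"]]
      by (simp add: top finite_bicyclic_mult_left_fibre bicyclic_mult_cancel)
  qed
  then show ?thesis
    using top by (metis discrete_topology_unique surj_pair)
qed

end
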